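(* Let $G$ be a profinite group whose set of coprime commutators has cardinality less than $2^{\aleph_0}$. Let $x\in G$ and let $H$ be a (closed) subgroup of $G$ such that $\pi(x)\cap\pi(H)=\emptyset$. Then the centralizer $C_H(x)$ has finite index in $H$.
   Context: For an element $x$ of a profinite group, $\pi(x)$ denotes the set of primes dividing the order of the procyclic subgroup $\overline{\langle x\rangle}$; for a profinite group $H$, $\pi(H)$ is the set of primes dividing its order (a Steinitz number). A coprime commutator in a profinite group $G$ is an element $[x,y]$ with $x,y\in G$ and $\pi(x)\cap\pi(y)=\emptyset$. *)

theory Defs
  imports "HOL-Analysis.Analysis" "HOL-Algebra.Algebra" "HOL-Library.Equipollence"
begin

definition topological_group :: "('a, 'b) monoid_scheme \<Rightarrow> 'a topology \<Rightarrow> bool" where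
  "topological_group G T \<longleftrightarrow> group G \<and> topspace T = carrier G
     \<and> continuous_map (prod_topology T T) T (\<lambda>(x, y). x \<otimes>\<^bsub>G\<^esub> y)
     \<and> continuous_map T T (\<lambda>x. inv\<^bsub>G\<^esub> x)"

definition totally_disconnected_space :: "'a topology \<Rightarrow> bool" where
  "totally_disconnected_space T \<longleftrightarrow>
     (\<forall>x\<in>topspace T. connected_component_of_set T x = {x})"

definition profinite_group :: "('a, 'b) monoid_scheme \<Rightarrow> 'a topology \<Rightarrow> bool" where
  "profinite_group G T \<longleftrightarrow> topological_group G T \<and> compact_space T
     \<and> Hausdorff_space T \<and> totally_disconnected_space T"

text \<open>The set of primes dividing the (Steinitz) order of a closed subgroup H of G:
  the order of H is the lcm of the finite indices |H : H \<inter> U|, U ranging over the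
  open normal subgroups of G.\<close>
definition prime_set :: "('a, 'b) monoid_scheme \<Rightarrow> 'a topology \<Rightarrow> 'a set \<Rightarrow> nat set" where
  "prime_set G T H = {p. Factorial_Ring.prime p \<and> (\<exists>U. openin T U \<and> U \<lhd> G \<and>
       p dvd card ((\<lambda>h. (H \<inter> U) #>\<^bsub>G\<^esub> h) ` H))}"

definition prime_set_elem :: "('a, 'b) monoid_scheme \<Rightarrow> 'a topology \<Rightarrow> 'a \<Rightarrow> nat set" where
  "prime_set_elem G T x = prime_set G T (T closure_of (generate G {x}))"

definition commutator :: "('a, 'b) monoid_scheme \<Rightarrow> 'a \<Rightarrow> 'a \<Rightarrow> 'a" where
  "commutator G x y = inv\<^bsub>G\<^esub> x \<otimes>\<^bsub>G\<^esub> inv\<^bsub>G\<^esub> y \<otimes>\<^bsub>G\<^esub> x \<otimes>\<^bsub>G\<^esub> y"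

definition coprime_commutators :: "('a, 'b) monoid_scheme \<Rightarrow> 'a topology \<Rightarrow> 'a set" where
  "coprime_commutators G T = {commutator G x y | x y. x \<in> carrier G \<and> y \<in> carrier G \<and>
       prime_set_elem G T x \<inter> prime_set_elem G T y = {}}"

definition centralizer_in :: "('a, 'b) monoid_scheme \<Rightarrow> 'a set \<Rightarrow> 'a \<Rightarrow> 'a set" where
  "centralizer_in G H x = {h \<in> H. h \<otimes>\<^bsub>G\<^esub> x = x \<otimes>\<^bsub>G\<^esub> h}"

end

theory Submission
  imports Defs
begin

text \<open>The conjugacy class \<open>S = {h\<inverse> x h | h \<in> H}\<close> is in bijection with the cosets of
  \<open>C\<^sub>H(x)\<close> in \<open>H\<close>, and \<open>s \<mapsto> x\<inverse> s\<close> embeds it into the coprime commutators, since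
  \<open>x\<inverse> h\<inverse> x h = [x, h]\<close> and \<open>\<pi>(h) \<subseteq> \<pi>(H)\<close> for \<open>h \<in> H\<close>. So \<open>S\<close> has fewer points than the
  continuum. But \<open>S\<close> is compact, and conjugation by elements of \<open>H\<close> acts on it transitively by
  homeomorphisms: if one of its points were isolated, all would be, and \<open>S\<close> would be finite.
  An infinite \<open>S\<close> would thus be a nonempty perfect compact Hausdorff space, which has at least
  continuum many points.\<close>

lemma eqpoll_image_if_same_fibres:
  assumes "\<And>a b. a \<in> A \<Longrightarrow> b \<in> A \<Longrightarrow> f a = f b \<longleftrightarrow> g a = g b"
  shows "f ` A \<approx> g ` A"
proof -
  have "bij_betw (\<lambda>y. f (inv_into A g y)) (g ` A) (f ` A)"
  proof (rule bij_betw_imageI)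
    show "inj_on (\<lambda>y. f (inv_into A g y)) (g ` A)"
      by (rule inj_onI) (metis assms f_inv_into_f inv_into_into)
    have "f (inv_into A g (g a)) = f a" if "a \<in> A" for a
      using assms that by (metis f_inv_into_f image_eqI inv_into_into)
    then show "(\<lambda>y. f (inv_into A g y)) ` g ` A = f ` A"
      by (auto simp: image_image intro!: image_cong)
  qed
  then show ?thesis
    using bij_betw_inv eqpoll_def by blast
qed

lemma (in group) rcos_eq_iff:
  assumes "subgroup M G" "a \<in> carrier G" "b \<in> carrier G"
  shows "M #> a = M #> b \<longleftrightarrow> a \<otimes> inv b \<in> M"
proof
  assume "M #> a = M #> b"
  then have "a \<in> M #> b" using rcos_self[OF assms(2,1)] by simp
  then show "a \<otimes> inv b \<in> M"
    using subgroup.rcos_module_imp[OF assms(1) is_group assms(3)] by blast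
next
  assume "a \<otimes> inv b \<in> M"
  then have "a \<in> M #> b"
    using subgroup.rcos_module_rev[OF assms(1) is_group assms(3,2)] by blast
  then show "M #> a = M #> b" using repr_independence[OF _ assms(3,1)] by simp
qed

lemma r_coset_carrier_update: "r_coset (G\<lparr>carrier := H\<rparr>) A a = r_coset G A a"
  by (simp add: r_coset_def)

lemma continuous_map_group_mult:
  assumes "topological_group G T" "continuous_map Z T f" "continuous_map Z T g"
  shows "continuous_map Z T (\<lambda>y. f y \<otimes>\<^bsub>G\<^esub> g y)"
proof -
  have "continuous_map (prod_topology T T) T (\<lambda>(x, y). x \<otimes>\<^bsub>G\<^esub> y)"
    using assms(1) by (simp add: topological_group_def)
  from continuous_map_compose[OF continuous_map_pairedI[OF assms(2,3)] this]
  show ?thesis by (simp add: o_def)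
qed

lemma continuous_map_group_inv:
  assumes "topological_group G T" "continuous_map Z T f"
  shows "continuous_map Z T (\<lambda>y. inv\<^bsub>G\<^esub> f y)"
proof -
  have "continuous_map T T (\<lambda>x. inv\<^bsub>G\<^esub> x)"
    using assms(1) by (simp add: topological_group_def)
  from continuous_map_compose[OF assms(2) this] show ?thesis by (simp add: o_def)
qed

lemma (in group) subgroup_closure_of:
  assumes tg: "topological_group G T" and A: "subgroup A G"
  shows "subgroup (T closure_of A) G"
proof -
  have top: "topspace T = carrier G"
    and mult: "continuous_map (prod_topology T T) T (\<lambda>(x, y). x \<otimes> y)"
    and inv: "continuous_map T T (\<lambda>x. inv x)"
    using tg by (simp_all add: topological_group_def)
  show ?thesis
  proof (rule subgroupI)
    show "T closure_of A \<subseteq> carrier G"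
      using top closure_of_subset_topspace by metis
    have "A \<subseteq> T closure_of A"
      using closure_of_subset top subgroup.subset[OF A] by metis
    then show "T closure_of A \<noteq> {}"
      using subgroup.one_closed[OF A] by blast
  next
    fix a assume "a \<in> T closure_of A"
    moreover have "(\<lambda>x. inv x) ` (T closure_of A) \<subseteq> T closure_of ((\<lambda>x. inv x) ` A)"
      by (rule continuous_map_image_closure_subset[OF inv])
    moreover have "T closure_of ((\<lambda>x. inv x) ` A) \<subseteq> T closure_of A"
      by (rule closure_of_mono) (auto intro: subgroup.m_inv_closed[OF A])
    ultimately show "inv a \<in> T closure_of A" by blast
  next
    fix a b assume "a \<in> T closure_of A" "b \<in> T closure_of A"
    then have "(a, b) \<in> prod_topology T T closure_of (A \<times> A)"
      by (simp add: closure_of_Times)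
    moreover have "(\<lambda>(x, y). x \<otimes> y) ` (prod_topology T T closure_of (A \<times> A))
        \<subseteq> T closure_of ((\<lambda>(x, y). x \<otimes> y) ` (A \<times> A))"
      by (rule continuous_map_image_closure_subset[OF mult])
    moreover have "T closure_of ((\<lambda>(x, y). x \<otimes> y) ` (A \<times> A)) \<subseteq> T closure_of A"
      by (rule closure_of_mono) (auto intro: subgroup.m_closed[OF A])
    ultimately show "a \<otimes> b \<in> T closure_of A" by blast
  qed
qed

text \<open>The cosets of \<open>H \<inter> U\<close> in \<open>H\<close> form the quotient \<open>H/(H \<inter> U)\<close>, in which those of \<open>K \<inter> U\<close> in
  \<open>K\<close> correspond to the image of \<open>K\<close>; Lagrange's theorem applies there.\<close>
lemma (in group) index_Int_normal_dvd:
  assumes H: "subgroup H G" and K: "subgroup K G" and KH: "K \<subseteq> H" and U: "U \<lhd> G"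
  shows "card ((\<lambda>k. (K \<inter> U) #> k) ` K) dvd card ((\<lambda>h. (H \<inter> U) #> h) ` H)"
proof -
  define H' where "H' = G\<lparr>carrier := H\<rparr>"
  interpret N: normal "U \<inter> H" H'
    unfolding H'_def by (rule normal_Int_subgroup[OF H U])
  let ?\<phi> = "\<lambda>a. (U \<inter> H) #>\<^bsub>H'\<^esub> a"
  define Q where "Q = H' Mod (U \<inter> H)"
  have carrier_Q: "carrier Q = (\<lambda>h. (H \<inter> U) #> h) ` H"
    unfolding Q_def H'_def by (simp add: carrier_FactGroup r_coset_carrier_update Int_commute)
  have "group_hom H' Q ?\<phi>"
    unfolding Q_def
    by (simp add: group_hom_def group_hom_axioms_def N.factorgroup_is_group N.r_coset_hom_Mod
        N.is_group)
  moreover have "subgroup K H'"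
    unfolding H'_def by (rule subgroup_incl[OF K H KH])
  ultimately have "subgroup (?\<phi> ` K) Q"
    by (rule group_hom.subgroup_img_is_subgroup)
  then have "card (rcosets\<^bsub>Q\<^esub> (?\<phi> ` K)) * card (?\<phi> ` K) = order Q"
    by (rule group.lagrange[OF N.factorgroup_is_group[folded Q_def]])
  then have image_dvd: "card (?\<phi> ` K) dvd card (carrier Q)"
    unfolding order_def by (metis dvd_triv_right)
  have "?\<phi> ` K \<approx> (\<lambda>k. (K \<inter> U) #> k) ` K"
  proof (rule eqpoll_image_if_same_fibres)
    fix a b assume "a \<in> K" "b \<in> K"
    then have a: "a \<in> carrier G" and b: "b \<in> carrier G" and ab_K: "a \<otimes> inv b \<in> K"
      using K by (auto simp: subgroup.mem_carrier subgroup.m_closed subgroup.m_inv_closed)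
    have UH: "subgroup (U \<inter> H) G" and KU: "subgroup (K \<inter> U) G"
      using U H K by (simp_all add: subgroups_Inter_pair normal_imp_subgroup)
    have "?\<phi> a = ?\<phi> b \<longleftrightarrow> (U \<inter> H) #> a = (U \<inter> H) #> b"
      by (simp add: H'_def r_coset_carrier_update)
    also have "\<dots> \<longleftrightarrow> a \<otimes> inv b \<in> U \<inter> H"
      by (rule rcos_eq_iff[OF UH a b])
    also have "\<dots> \<longleftrightarrow> a \<otimes> inv b \<in> K \<inter> U"
      using ab_K KH by blast
    also have "\<dots> \<longleftrightarrow> (K \<inter> U) #> a = (K \<inter> U) #> b"
      by (rule rcos_eq_iff[OF KU a b, symmetric])
    finally show "?\<phi> a = ?\<phi> b \<longleftrightarrow> (K \<inter> U) #> a = (K \<inter> U) #> b" .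
  qed
  then have "card (?\<phi> ` K) = card ((\<lambda>k. (K \<inter> U) #> k) ` K)"
    by (meson bij_betw_same_card eqpoll_def)
  then show ?thesis using image_dvd carrier_Q by simp
qed

lemma (in group) prime_set_mono:
  assumes "subgroup H G" "subgroup K G" "K \<subseteq> H"
  shows "prime_set G T K \<subseteq> prime_set G T H"
proof
  fix p assume "p \<in> prime_set G T K"
  then obtain U where p: "Factorial_Ring.prime p" and U: "openin T U" "U \<lhd> G"
    and dvd_K: "p dvd card ((\<lambda>k. (K \<inter> U) #> k) ` K)"
    unfolding prime_set_def by blast
  have "p dvd card ((\<lambda>h. (H \<inter> U) #> h) ` H)"
    using dvd_trans[OF dvd_K index_Int_normal_dvd[OF assms U(2)]] .
  then show "p \<in> prime_set G T H"
    unfolding prime_set_def using p U by blast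
qed

lemma (in group) prime_set_elem_subset:
  assumes "topological_group G T" "subgroup H G" "closedin T H" "h \<in> H"
  shows "prime_set_elem G T h \<subseteq> prime_set G T H"
proof -
  have "generate G {h} \<subseteq> H"
    using generate_subgroup_incl assms(2,4) by simp
  then have "T closure_of (generate G {h}) \<subseteq> H"
    using closure_of_minimal assms(3) by blast
  moreover have "subgroup (T closure_of (generate G {h})) G"
    using assms(2,4) by (intro subgroup_closure_of[OF assms(1)] generate_is_subgroup)
      (simp add: subgroup.mem_carrier)
  ultimately show ?thesis
    unfolding prime_set_elem_def using prime_set_mono assms(2) by blast
qed

lemma subset_derived_set_of_homogeneous:
  assumes cpt: "compactin T S" and "infinite S"
    and homogeneous: "\<And>s t. s \<in> S \<Longrightarrow> t \<in> S \<Longrightarrow>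
      \<exists>f. continuous_map T T f \<and> f ` S \<subseteq> S \<and> inj_on f S \<and> f t = s"
  shows "S \<subseteq> T derived_set_of S"
proof
  fix s assume s: "s \<in> S"
  show "s \<in> T derived_set_of S"
  proof (rule ccontr)
    assume "s \<notin> T derived_set_of S"
    then obtain V where V: "openin T V" "s \<in> V" and isolated: "V \<inter> S \<subseteq> {s}"
      using s compactin_subset_topspace[OF cpt] by (auto simp: in_derived_set_of)
    have "\<exists>W. openin T W \<and> t \<in> W \<and> W \<inter> S \<subseteq> {t}" if t: "t \<in> S" for t
    proof -
      obtain f where f: "continuous_map T T f" "f ` S \<subseteq> S" "inj_on f S" "f t = s"
        using homogeneous[OF s t] by blast
      let ?W = "{y \<in> topspace T. f y \<in> V}"
      have "openin T ?W"
        using openin_continuous_map_preimage[OF f(1) V(1)] .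
      moreover have "t \<in> ?W"
        using t f(4) V(2) compactin_subset_topspace[OF cpt] by auto
      moreover have "?W \<inter> S \<subseteq> {t}"
        using isolated f(2,3,4) t by (auto simp: inj_on_def)
      ultimately show ?thesis by blast
    qed
    then obtain W where W: "\<And>t. t \<in> S \<Longrightarrow> openin T (W t) \<and> t \<in> W t \<and> W t \<inter> S \<subseteq> {t}"
      by metis
    then obtain F where "finite F" "F \<subseteq> W ` S" "S \<subseteq> \<Union>F"
      using cpt unfolding compactin_def by (metis (no_types, lifting) UN_I imageE subsetI)
    then obtain S0 where "finite S0" "S0 \<subseteq> S" "S \<subseteq> (\<Union>t\<in>S0. W t)"
      by (metis finite_subset_image)
    then have "S \<subseteq> S0"
      using W by blast
    with \<open>finite S0\<close> \<open>infinite S\<close> show False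
      using finite_subset by blast
  qed
qed

lemma continuum_lepoll_homogeneous_compactin:
  assumes "Hausdorff_space T" "compactin T S" "infinite S"
    and "\<And>s t. s \<in> S \<Longrightarrow> t \<in> S \<Longrightarrow>
      \<exists>f. continuous_map T T f \<and> f ` S \<subseteq> S \<and> inj_on f S \<and> f t = s"
  shows "(UNIV :: real set) \<lesssim> S"
proof (rule lepoll_perfect_set)
  show "completely_metrizable_space (subtopology T S) \<or>
      locally_compact_space (subtopology T S) \<and> Hausdorff_space (subtopology T S)"
    using assms(1,2) by (simp add: compact_imp_locally_compact_space compact_space_subtopology
        Hausdorff_space_subtopology)
  have "T derived_set_of S \<subseteq> S"
    using compactin_imp_closedin[OF assms(1,2)] derived_set_of_subset_closure_of closure_of_eq
    by metis
  then have "T derived_set_of S = S"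
    using subset_derived_set_of_homogeneous[OF assms(2-4)] by blast
  then show "subtopology T S derived_set_of S = S"
    by (simp add: derived_set_of_subtopology)
  show "S \<noteq> {}"
    using assms(3) by auto
qed

definition conjugacy_class_in :: "('a, 'b) monoid_scheme \<Rightarrow> 'a set \<Rightarrow> 'a \<Rightarrow> 'a set" where
  "conjugacy_class_in G H x = (\<lambda>h. inv\<^bsub>G\<^esub> h \<otimes>\<^bsub>G\<^esub> x \<otimes>\<^bsub>G\<^esub> h) ` H"

lemma (in group) conj_mult:
  assumes "x \<in> carrier G" "a \<in> carrier G" "b \<in> carrier G"
  shows "inv (a \<otimes> b) \<otimes> x \<otimes> (a \<otimes> b) = inv b \<otimes> (inv a \<otimes> x \<otimes> a) \<otimes> b"
  using assms by (simp add: inv_mult_group m_assoc)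

lemma (in group) conj_eq_conj_iff_commute:
  assumes "x \<in> carrier G" "a \<in> carrier G" "b \<in> carrier G"
  shows "inv a \<otimes> x \<otimes> a = inv b \<otimes> x \<otimes> b \<longleftrightarrow> (a \<otimes> inv b) \<otimes> x = x \<otimes> (a \<otimes> inv b)"
proof -
  have "inv a \<otimes> x \<otimes> a = inv b \<otimes> x \<otimes> b \<longleftrightarrow>
      a \<otimes> (inv a \<otimes> x \<otimes> a) \<otimes> inv b = a \<otimes> (inv b \<otimes> x \<otimes> b) \<otimes> inv b"
    using assms by simp
  also have "a \<otimes> (inv a \<otimes> x \<otimes> a) \<otimes> inv b = x \<otimes> (a \<otimes> inv b)"
    using assms by (simp add: m_assoc[symmetric])
  also have "a \<otimes> (inv b \<otimes> x \<otimes> b) \<otimes> inv b = (a \<otimes> inv b) \<otimes> x"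
    using assms by (simp add: m_assoc)
  finally show ?thesis by auto
qed

lemma (in group) subgroup_centralizer_in:
  assumes H: "subgroup H G" and x: "x \<in> carrier G"
  shows "subgroup (centralizer_in G H x) G"
proof (rule subgroupI)
  show "centralizer_in G H x \<subseteq> carrier G"
    using H by (auto simp: centralizer_in_def subgroup.mem_carrier)
  show "centralizer_in G H x \<noteq> {}"
    using H x subgroup.one_closed unfolding centralizer_in_def by fastforce
next
  fix a assume "a \<in> centralizer_in G H x"
  then have aH: "a \<in> H" and a: "a \<in> carrier G" and comm: "a \<otimes> x = x \<otimes> a"
    using H by (auto simp: centralizer_in_def subgroup.mem_carrier)
  have "inv a \<otimes> x = inv a \<otimes> (x \<otimes> a) \<otimes> inv a"
    using a x by (simp add: m_assoc)
  also have "\<dots> = x \<otimes> inv a"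
    using a x by (simp add: comm[symmetric] m_assoc[symmetric])
  finally show "inv a \<in> centralizer_in G H x"
    using aH H by (simp add: centralizer_in_def subgroup.m_inv_closed)
next
  fix a b assume "a \<in> centralizer_in G H x" "b \<in> centralizer_in G H x"
  then have "a \<in> H" "b \<in> H" and a: "a \<in> carrier G" and b: "b \<in> carrier G"
    and comm: "a \<otimes> x = x \<otimes> a" "b \<otimes> x = x \<otimes> b"
    using H by (auto simp: centralizer_in_def subgroup.mem_carrier)
  moreover have "a \<otimes> b \<otimes> x = x \<otimes> (a \<otimes> b)"
    using a b x by (simp add: m_assoc comm(2)) (simp add: m_assoc[symmetric] comm(1))
  ultimately show "a \<otimes> b \<in> centralizer_in G H x"
    using H by (simp add: centralizer_in_def subgroup.m_closed)
qed

lemma (in group) rcosets_centralizer_in_eqpoll_conjugacy_class_in: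
  assumes "subgroup H G" "x \<in> carrier G"
  shows "(\<lambda>h. centralizer_in G H x #> h) ` H \<approx> conjugacy_class_in G H x"
  unfolding conjugacy_class_in_def
proof (rule eqpoll_image_if_same_fibres)
  fix a b assume "a \<in> H" "b \<in> H"
  then have a: "a \<in> carrier G" and b: "b \<in> carrier G" and "a \<otimes> inv b \<in> H"
    using assms(1) by (auto simp: subgroup.mem_carrier subgroup.m_closed subgroup.m_inv_closed)
  then have "centralizer_in G H x #> a = centralizer_in G H x #> b \<longleftrightarrow>
      (a \<otimes> inv b) \<otimes> x = x \<otimes> (a \<otimes> inv b)"
    using rcos_eq_iff[OF subgroup_centralizer_in[OF assms] a b] by (simp add: centralizer_in_def)
  also have "\<dots> \<longleftrightarrow> inv a \<otimes> x \<otimes> a = inv b \<otimes> x \<otimes> b"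
    using conj_eq_conj_iff_commute[OF assms(2) a b] by simp
  finally show "centralizer_in G H x #> a = centralizer_in G H x #> b \<longleftrightarrow>
      inv a \<otimes> x \<otimes> a = inv b \<otimes> x \<otimes> b" .
qed

lemma (in group) conjugacy_class_in_lepoll_coprime_commutators:
  assumes "topological_group G T" "subgroup H G" "closedin T H" "x \<in> carrier G"
    and disjoint: "prime_set_elem G T x \<inter> prime_set G T H = {}"
  shows "conjugacy_class_in G H x \<lesssim> coprime_commutators G T"
  unfolding lepoll_def
proof (intro exI conjI)
  have class_carrier: "conjugacy_class_in G H x \<subseteq> carrier G"
    using assms(2,4) by (auto simp: conjugacy_class_in_def subgroup.mem_carrier)
  show "inj_on (\<lambda>s. inv x \<otimes> s) (conjugacy_class_in G H x)"
  proof (rule inj_onI)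
    fix s t assume "s \<in> conjugacy_class_in G H x" "t \<in> conjugacy_class_in G H x"
      and "inv x \<otimes> s = inv x \<otimes> t"
    moreover from calculation have "s \<in> carrier G" "t \<in> carrier G"
      using class_carrier by blast+
    ultimately show "s = t"
      using assms(4) by simp
  qed
  show "(\<lambda>s. inv x \<otimes> s) ` conjugacy_class_in G H x \<subseteq> coprime_commutators G T"
  proof (clarsimp simp: conjugacy_class_in_def)
    fix h assume hH: "h \<in> H"
    have h: "h \<in> carrier G"
      by (rule subgroup.mem_carrier[OF assms(2) hH])
    have "prime_set_elem G T h \<subseteq> prime_set G T H"
      by (rule prime_set_elem_subset[OF assms(1-3) hH])
    then have "prime_set_elem G T x \<inter> prime_set_elem G T h = {}"
      using disjoint by blast
    moreover have "inv x \<otimes> (inv h \<otimes> x \<otimes> h) = commutator G x h"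
      using h assms(4) by (simp add: commutator_def m_assoc)
    ultimately show "inv x \<otimes> (inv h \<otimes> x \<otimes> h) \<in> coprime_commutators G T"
      unfolding coprime_commutators_def using h assms(4) by blast
  qed
qed

text \<open>The homeomorphism carrying \<open>k\<inverse> x k\<close> to \<open>h\<inverse> x h\<close> is conjugation by \<open>k\<inverse> h\<close>.\<close>
lemma (in group) continuum_lepoll_conjugacy_class_in:
  assumes tg: "topological_group G T" and "compact_space T" "Hausdorff_space T"
    and H: "subgroup H G" and "closedin T H" and x: "x \<in> carrier G"
    and "infinite (conjugacy_class_in G H x)"
  shows "(UNIV :: real set) \<lesssim> conjugacy_class_in G H x"
proof (rule continuum_lepoll_homogeneous_compactin[OF assms(3) _ assms(7)])
  have top: "topspace T = carrier G"
    using tg by (simp add: topological_group_def)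
  have id: "continuous_map T T (\<lambda>y. y)"
    using continuous_map_id by (simp add: id_def)
  have const: "continuous_map T T (\<lambda>y. a)" if "a \<in> carrier G" for a
    using that top by simp
  have conj: "continuous_map T T (\<lambda>y. inv a \<otimes> y \<otimes> a)" if "a \<in> carrier G" for a
    using that by (intro continuous_map_group_mult[OF tg] id const) simp_all
  have "continuous_map T T (\<lambda>h. inv h \<otimes> x \<otimes> h)"
    using x by (intro continuous_map_group_mult[OF tg] continuous_map_group_inv[OF tg] id const)
  then show "compactin T (conjugacy_class_in G H x)"
    unfolding conjugacy_class_in_def
    by (rule image_compactin[OF closedin_compact_space[OF assms(2,5)]])
  have Hc: "\<And>h. h \<in> H \<Longrightarrow> h \<in> carrier G"
    by (rule subgroup.mem_carrier[OF H])
  fix s t assume "s \<in> conjugacy_class_in G H x" "t \<in> conjugacy_class_in G H x"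
  then obtain h k where h: "h \<in> H" and k: "k \<in> H"
    and st: "s = inv h \<otimes> x \<otimes> h" "t = inv k \<otimes> x \<otimes> k"
    unfolding conjugacy_class_in_def by blast
  define a where "a = inv k \<otimes> h"
  have aH: "a \<in> H"
    unfolding a_def using h k H by (simp add: subgroup.m_closed subgroup.m_inv_closed)
  then have a: "a \<in> carrier G"
    by (rule Hc)
  show "\<exists>f. continuous_map T T f \<and> f ` conjugacy_class_in G H x \<subseteq> conjugacy_class_in G H x
      \<and> inj_on f (conjugacy_class_in G H x) \<and> f t = s"
  proof (intro exI conjI)
    show "continuous_map T T (\<lambda>y. inv a \<otimes> y \<otimes> a)"
      by (rule conj[OF a])
    show "(\<lambda>y. inv a \<otimes> y \<otimes> a) ` conjugacy_class_in G H x \<subseteq> conjugacy_class_in G H x"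
    proof
      fix y assume "y \<in> (\<lambda>y. inv a \<otimes> y \<otimes> a) ` conjugacy_class_in G H x"
      then obtain k' where k': "k' \<in> H" and y: "y = inv a \<otimes> (inv k' \<otimes> x \<otimes> k') \<otimes> a"
        unfolding conjugacy_class_in_def by blast
      have "y = inv (k' \<otimes> a) \<otimes> x \<otimes> (k' \<otimes> a)"
        unfolding y by (rule conj_mult[OF x Hc[OF k'] a, symmetric])
      moreover have "k' \<otimes> a \<in> H"
        by (rule subgroup.m_closed[OF H k' aH])
      ultimately show "y \<in> conjugacy_class_in G H x"
        unfolding conjugacy_class_in_def by blast
    qed
    have "conjugacy_class_in G H x \<subseteq> carrier G"
      using x Hc by (auto simp: conjugacy_class_in_def)
    then show "inj_on (\<lambda>y. inv a \<otimes> y \<otimes> a) (conjugacy_class_in G H x)"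
      using a by (intro inj_onI) (simp add: subset_iff)
    have "inv a \<otimes> t \<otimes> a = inv (k \<otimes> a) \<otimes> x \<otimes> (k \<otimes> a)"
      unfolding st(2) by (rule conj_mult[OF x Hc[OF k] a, symmetric])
    also have "k \<otimes> a = h"
      unfolding a_def using Hc[OF h] Hc[OF k] by (simp add: m_assoc[symmetric])
    finally show "inv a \<otimes> t \<otimes> a = s"
      using st(1) by simp
  qed
qed

theorem lemma2p2:
  fixes G :: "('a, 'b) monoid_scheme" and T :: "'a topology" and H :: "'a set" and x :: 'a
  assumes "profinite_group G T"
    and "coprime_commutators G T \<prec> (UNIV :: real set)"
    and "x \<in> carrier G"
    and "subgroup H G" and "closedin T H"
    and "prime_set_elem G T x \<inter> prime_set G T H = {}"
  shows "finite ((\<lambda>h. centralizer_in G H x #>\<^bsub>G\<^esub> h) ` H)"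
proof -
  have tg: "topological_group G T" and compact: "compact_space T" and T2: "Hausdorff_space T"
    using assms(1) by (simp_all add: profinite_group_def)
  interpret group G
    using tg by (simp add: topological_group_def)
  have "finite (conjugacy_class_in G H x)"
  proof (rule ccontr)
    assume "infinite (conjugacy_class_in G H x)"
    then have "(UNIV :: real set) \<lesssim> conjugacy_class_in G H x"
      by (rule continuum_lepoll_conjugacy_class_in[OF tg compact T2 assms(4,5,3)])
    also have "\<dots> \<lesssim> coprime_commutators G T"
      by (rule conjugacy_class_in_lepoll_coprime_commutators[OF tg assms(4,5,3,6)])
    finally show False
      using assms(2) lesspoll_trans1 lesspoll_def by blast
  qed
  then show ?thesis
    using rcosets_centralizer_in_eqpoll_conjugacy_class_in[OF assms(4,3)] eqpoll_finite_iff by blast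
qed

end
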